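(* Let $A$ be a finite set, $p : A \to [0,1]$, and $\gamma : \mathbb{N}^* \to (0,1]$ non-increasing; set $p_i(u) := \gamma(i)p(u)$. Let $\{X_i(u)\}_{i\ge1,u\in A}$ be independent with $X_i(u)\sim\mathrm{Bernoulli}(p_i(u))$. For $n \ge 1$ define $Z_n(u) := \mathds{1}\{X_1(u)=\dots=X_n(u)=0\}$, $R_n := \sum_{u\in A} Z_n(u)\,p_{n+1}(u)$, \[ U^\gamma_n(u) := \sum_{i=1}^n \mathds{1}\{X_i(u)=1,\ X_j(u)=0\ \forall j\in\{1,\dots,n\}\setminus\{i\}\}\,\frac{\gamma(n+1)}{\gamma(i)}, \] $\hat R_n := \frac1n\sum_{u\in A}U^\gamma_n(u)$, and $\lambda := \sum_{u\in A}p(u)$. Then \[ \mathbb{E}[R_n] - \mathbb{E}[\hat R_n] \in \left[-\gamma(n+1)\frac{\lambda}{n}, 0\right]. \]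
   Context: Influencer fatigue model: at the $i$-th selection of the influencer, node $u$ is activated with probability $\gamma(i)p(u)$, independently across nodes and selections. $R_n$ is the remaining potential for the $(n+1)$-th selection, $\hat R_n$ the reweighted Good-Turing estimator. *)

theory Defs
  imports "HOL-Probability.Probability"
begin

text \<open>Influencer fatigue model. X i u w is the outcome (True = activated) of node u
at the i-th selection; indices i start at 1.\<close>

definition fat_Z :: "(nat \<Rightarrow> 'a \<Rightarrow> 'w \<Rightarrow> bool) \<Rightarrow> nat \<Rightarrow> 'a \<Rightarrow> 'w \<Rightarrow> real" where
  "fat_Z X n u w = (if \<forall>i\<in>{1..n}. \<not> X i u w then 1 else 0)"

definition fat_R :: "(nat \<Rightarrow> real) \<Rightarrow> ('a \<Rightarrow> real) \<Rightarrow> 'a set \<Rightarrow>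
    (nat \<Rightarrow> 'a \<Rightarrow> 'w \<Rightarrow> bool) \<Rightarrow> nat \<Rightarrow> 'w \<Rightarrow> real" where
  "fat_R \<gamma> p A X n w = (\<Sum>u\<in>A. fat_Z X n u w * (\<gamma> (n + 1) * p u))"

definition fat_U :: "(nat \<Rightarrow> real) \<Rightarrow> (nat \<Rightarrow> 'a \<Rightarrow> 'w \<Rightarrow> bool) \<Rightarrow> nat \<Rightarrow> 'a \<Rightarrow> 'w \<Rightarrow> real" where
  "fat_U \<gamma> X n u w = (\<Sum>i=1..n.
      (if X i u w \<and> (\<forall>j\<in>{1..n} - {i}. \<not> X j u w) then 1 else 0) * (\<gamma> (n + 1) / \<gamma> i))"

definition fat_Rhat :: "(nat \<Rightarrow> real) \<Rightarrow> 'a set \<Rightarrow>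
    (nat \<Rightarrow> 'a \<Rightarrow> 'w \<Rightarrow> bool) \<Rightarrow> nat \<Rightarrow> 'w \<Rightarrow> real" where
  "fat_Rhat \<gamma> A X n w = (1 / real n) * (\<Sum>u\<in>A. fat_U \<gamma> X n u w)"

end

theory Submission
  imports Defs
begin

text \<open>
  Write \<open>q\<^sub>i(u) = \<gamma>(i) p(u)\<close>. Node \<open>u\<close> contributes to \<open>\<hat>R\<^sub>n\<close> only on the events "activated
  only at selection \<open>i\<close>", of probability \<open>q\<^sub>i(u) \<Prod>\<^sub>j\<^sub>\<noteq>\<^sub>i (1 - q\<^sub>j(u))\<close>; the weight
  \<open>\<gamma>(n+1)/\<gamma>(i)\<close> cancels the fatigue factor \<open>\<gamma>(i)\<close>, so the expected contribution is
  \<open>\<gamma>(n+1) p(u)/n \<Sum>\<^sub>i \<Prod>\<^sub>j\<^sub>\<noteq>\<^sub>i (1 - q\<^sub>j(u))\<close>. Expanding each factor \<open>1 = (1 - q\<^sub>i(u)) + q\<^sub>i(u)\<close>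
  turns this into \<open>\<gamma>(n+1) p(u) P(u never active) + \<gamma>(n+1) p(u)/n P(u active exactly once)\<close>,
  and the first term is the contribution of \<open>u\<close> to \<open>E[R\<^sub>n]\<close>. Hence
  \<open>E[R\<^sub>n] - E[\<hat>R\<^sub>n] = -\<gamma>(n+1)/n \<Sum>\<^sub>u p(u) P(u active exactly once)\<close>, which lies in the
  claimed interval.
\<close>

lemma (in prob_space) prob_indep_bernoulli_pattern:
  fixes Y :: "'i \<Rightarrow> 'a \<Rightarrow> bool"
  assumes indep: "indep_vars (\<lambda>_. count_space UNIV) Y I"
    and distr: "\<And>i. i \<in> I \<Longrightarrow> distr M (count_space UNIV) (Y i) = measure_pmf (bernoulli_pmf (q i))"
    and q: "\<And>i. i \<in> I \<Longrightarrow> 0 \<le> q i \<and> q i \<le> 1"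
    and J: "finite J" "J \<subseteq> I"
  shows "prob {w\<in>space M. \<forall>j\<in>J. Y j w = b j} = (\<Prod>j\<in>J. if b j then q j else 1 - q j)"
proof (cases "J = {}")
  case True
  then show ?thesis by (simp add: prob_space)
next
  case False
  define E where "E j = {w\<in>space M. Y j w = b j}" for j
  have prob_E: "prob (E j) = (if b j then q j else 1 - q j)" if "j \<in> I" for j
  proof -
    have "random_variable (count_space UNIV) (Y j)"
      using indep that by (simp add: indep_vars_def)
    then have "prob (E j) = measure (distr M (count_space UNIV) (Y j)) {b j}"
      by (simp add: E_def measure_distr vimage_def Int_def conj_commute)
    also have "\<dots> = (if b j then q j else 1 - q j)"
      using distr[OF that] q[OF that] by (simp add: measure_pmf_single)
    finally show ?thesis .
  qed
  have "indep_events E I"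
    unfolding E_def using indep by (rule indep_eventsI_indep_vars) simp
  moreover have "{w\<in>space M. \<forall>j\<in>J. Y j w = b j} = (\<Inter>j\<in>J. E j)"
    using False by (auto simp: E_def)
  ultimately have "prob {w\<in>space M. \<forall>j\<in>J. Y j w = b j} = (\<Prod>j\<in>J. prob (E j))"
    using J False by (simp add: indep_events_def)
  also have "\<dots> = (\<Prod>j\<in>J. if b j then q j else 1 - q j)"
    using J(2) prob_E by (intro prod.cong) auto
  finally show ?thesis .
qed

lemma (in prob_space) expectation_sum_indicator:
  assumes "finite I" "\<And>i. i \<in> I \<Longrightarrow> E i \<in> events"
  shows "expectation (\<lambda>w. \<Sum>i\<in>I. c i * indicator (E i) w) = (\<Sum>i\<in>I. c i * prob (E i))"
  using assms by (subst Bochner_Integration.integral_sum) (auto simp: less_top[symmetric])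

lemma sum_prod_one_minus_Diff:
  fixes q :: "'i \<Rightarrow> 'r::comm_ring_1"
  assumes "finite S"
  shows "(\<Sum>i\<in>S. \<Prod>j\<in>S-{i}. 1 - q j)
           = of_nat (card S) * (\<Prod>j\<in>S. 1 - q j) + (\<Sum>i\<in>S. q i * (\<Prod>j\<in>S-{i}. 1 - q j))"
proof -
  have "(\<Sum>i\<in>S. \<Prod>j\<in>S-{i}. 1 - q j) = (\<Sum>i\<in>S. (\<Prod>j\<in>S. 1 - q j) + q i * (\<Prod>j\<in>S-{i}. 1 - q j))"
  proof (rule sum.cong)
    fix i assume "i \<in> S"
    then show "(\<Prod>j\<in>S-{i}. 1 - q j) = (\<Prod>j\<in>S. 1 - q j) + q i * (\<Prod>j\<in>S-{i}. 1 - q j)"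
      using prod.remove[OF assms, of i "\<lambda>j. 1 - q j"] by (simp add: algebra_simps)
  qed simp
  then show ?thesis
    by (simp add: sum.distrib)
qed

locale fatigue_model = prob_space M for M :: "'w measure" +
  fixes A :: "'a set" and p :: "'a \<Rightarrow> real" and \<gamma> :: "nat \<Rightarrow> real"
    and X :: "nat \<Rightarrow> 'a \<Rightarrow> 'w \<Rightarrow> bool"
  assumes finite_A: "finite A"
    and p_bounds: "\<forall>u\<in>A. 0 \<le> p u \<and> p u \<le> 1"
    and \<gamma>_bounds: "\<forall>i\<ge>1. 0 < \<gamma> i \<and> \<gamma> i \<le> 1"
    and indep_X: "indep_vars (\<lambda>_. count_space UNIV) (\<lambda>(i, u). X i u) ({1..} \<times> A)"
    and distr_X: "\<forall>i\<ge>1. \<forall>u\<in>A. distr M (count_space UNIV) (X i u) = measure_pmf (bernoulli_pmf (\<gamma> i * p u))"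
begin

definition never_active :: "nat \<Rightarrow> 'a \<Rightarrow> 'w set" where
  "never_active n u = {w\<in>space M. \<forall>j\<in>{1..n}. \<not> X j u w}"

definition active_only_at :: "nat \<Rightarrow> 'a \<Rightarrow> nat \<Rightarrow> 'w set" where
  "active_only_at n u i = {w\<in>space M. \<forall>j\<in>{1..n}. X j u w = (j = i)}"

lemma random_variable_X: "1 \<le> i \<Longrightarrow> u \<in> A \<Longrightarrow> random_variable (count_space UNIV) (X i u)"
  using indep_X by (auto simp: indep_vars_def)

lemma sets_activation_pattern:
  assumes "u \<in> A" shows "{w\<in>space M. \<forall>j\<in>{1..n}. X j u w = b j} \<in> events"
proof (intro sets.sets_Collect_finite_All)
  fix j assume "j \<in> {1..n}"
  then have "X j u -` {b j} \<inter> space M \<in> events"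
    using random_variable_X assms by (intro measurable_sets) auto
  then show "{w\<in>space M. X j u w = b j} \<in> events"
    by (simp add: vimage_def Int_def conj_commute)
qed simp

lemma events_never_active: "u \<in> A \<Longrightarrow> never_active n u \<in> events"
  using sets_activation_pattern[of u n "\<lambda>_. False"] by (simp add: never_active_def)

lemma events_active_only_at: "u \<in> A \<Longrightarrow> active_only_at n u i \<in> events"
  using sets_activation_pattern[of u n "\<lambda>j. j = i"] by (simp add: active_only_at_def)

lemma prob_activation_pattern:
  assumes "u \<in> A"
  shows "prob {w\<in>space M. \<forall>j\<in>{1..n}. X j u w = b j}
           = (\<Prod>j=1..n. if b j then \<gamma> j * p u else 1 - \<gamma> j * p u)"
proof -
  have "prob {w\<in>space M. \<forall>k\<in>(\<lambda>j. (j, u)) ` {1..n}. (\<lambda>(i, u). X i u) k w = b (fst k)}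
      = (\<Prod>k\<in>(\<lambda>j. (j, u)) ` {1..n}. if b (fst k) then \<gamma> (fst k) * p (snd k) else 1 - \<gamma> (fst k) * p (snd k))"
    using assms p_bounds \<gamma>_bounds distr_X
    by (intro prob_indep_bernoulli_pattern[OF indep_X]) (auto simp: mult_le_one)
  then show ?thesis
    by (simp add: prod.reindex inj_on_def cong: if_cong)
qed

lemma prob_never_active: "u \<in> A \<Longrightarrow> prob (never_active n u) = (\<Prod>j=1..n. 1 - \<gamma> j * p u)"
  using prob_activation_pattern[of u n "\<lambda>_. False"] by (simp add: never_active_def)

lemma prob_active_only_at:
  assumes "u \<in> A" "i \<in> {1..n}"
  shows "prob (active_only_at n u i) = \<gamma> i * p u * (\<Prod>j\<in>{1..n}-{i}. 1 - \<gamma> j * p u)"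
proof -
  have "prob (active_only_at n u i) = (\<Prod>j=1..n. if j = i then \<gamma> j * p u else 1 - \<gamma> j * p u)"
    using prob_activation_pattern[OF assms(1), of n "\<lambda>j. j = i"] by (simp add: active_only_at_def)
  also have "\<dots> = \<gamma> i * p u * (\<Prod>j\<in>{1..n}-{i}. 1 - \<gamma> j * p u)"
    using assms(2) by (auto simp: prod.remove[of _ i] intro!: prod.cong)
  finally show ?thesis .
qed

lemma sum_prob_active_only_at_le_1:
  assumes "u \<in> A" shows "(\<Sum>i=1..n. prob (active_only_at n u i)) \<le> 1"
proof -
  have "(\<Sum>i=1..n. prob (active_only_at n u i)) = prob (\<Union>i\<in>{1..n}. active_only_at n u i)"
    using sets_activation_pattern[OF assms]
    by (intro finite_measure_finite_Union[symmetric])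
       (auto simp: active_only_at_def disjoint_family_on_def)
  then show ?thesis by simp
qed

lemma expectation_fat_R:
  "expectation (fat_R \<gamma> p A X n) = (\<Sum>u\<in>A. \<gamma> (n + 1) * p u * prob (never_active n u))"
proof -
  have "expectation (fat_R \<gamma> p A X n)
      = expectation (\<lambda>w. \<Sum>u\<in>A. \<gamma> (n + 1) * p u * indicator (never_active n u) w)"
    by (intro Bochner_Integration.integral_cong)
       (auto simp: fat_R_def fat_Z_def never_active_def indicator_def intro!: sum.cong)
  also have "\<dots> = (\<Sum>u\<in>A. \<gamma> (n + 1) * p u * prob (never_active n u))"
    using finite_A events_never_active by (rule expectation_sum_indicator)
  finally show ?thesis .
qed

lemma expectation_fat_Rhat:
  "expectation (fat_Rhat \<gamma> A X n)
     = (\<Sum>u\<in>A. \<Sum>i=1..n. \<gamma> (n + 1) / \<gamma> i * prob (active_only_at n u i)) / n"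
proof -
  let ?c = "\<lambda>i. \<gamma> (n + 1) / \<gamma> i"
  have "expectation (fat_Rhat \<gamma> A X n)
      = expectation (\<lambda>w. \<Sum>u\<in>A. \<Sum>i=1..n. ?c i * indicator (active_only_at n u i) w) / n"
    unfolding integral_divide_zero[symmetric]
    by (intro Bochner_Integration.integral_cong)
       (auto simp: fat_Rhat_def fat_U_def active_only_at_def indicator_def intro!: sum.cong)
  also have "\<dots> = (\<Sum>u\<in>A. expectation (\<lambda>w. \<Sum>i=1..n. ?c i * indicator (active_only_at n u i) w)) / n"
    using events_active_only_at
    by (subst Bochner_Integration.integral_sum) (auto simp: less_top[symmetric])
  also have "\<dots> = (\<Sum>u\<in>A. \<Sum>i=1..n. ?c i * prob (active_only_at n u i)) / n"
    using events_active_only_at by (simp only: expectation_sum_indicator finite_atLeastAtMost cong: sum.cong)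
  finally show ?thesis .
qed

lemma reweighted_sum_prob_active_only_at:
  assumes "u \<in> A"
  shows "(\<Sum>i=1..n. \<gamma> (n + 1) / \<gamma> i * prob (active_only_at n u i))
           = \<gamma> (n + 1) * p u * (n * prob (never_active n u) + (\<Sum>i=1..n. prob (active_only_at n u i)))"
proof -
  have "(\<Sum>i=1..n. \<gamma> (n + 1) / \<gamma> i * prob (active_only_at n u i))
      = \<gamma> (n + 1) * p u * (\<Sum>i=1..n. \<Prod>j\<in>{1..n}-{i}. 1 - \<gamma> j * p u)"
    using assms \<gamma>_bounds by (auto simp: prob_active_only_at sum_distrib_left intro!: sum.cong)
  also have "\<dots> = \<gamma> (n + 1) * p u * (n * prob (never_active n u) + (\<Sum>i=1..n. prob (active_only_at n u i)))"
    using assms by (simp add: sum_prod_one_minus_Diff prob_never_active prob_active_only_at mult.assoc)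
  finally show ?thesis .
qed

lemma expectation_fat_R_minus_fat_Rhat:
  assumes "n \<ge> 1"
  shows "expectation (fat_R \<gamma> p A X n) - expectation (fat_Rhat \<gamma> A X n)
           = - \<gamma> (n + 1) / n * (\<Sum>u\<in>A. p u * (\<Sum>i=1..n. prob (active_only_at n u i)))"
proof -
  have "expectation (fat_Rhat \<gamma> A X n)
      = (\<Sum>u\<in>A. \<gamma> (n + 1) * p u * (n * prob (never_active n u) + (\<Sum>i=1..n. prob (active_only_at n u i)))) / n"
    unfolding expectation_fat_Rhat by (simp only: reweighted_sum_prob_active_only_at cong: sum.cong)
  also have "\<dots> = (\<Sum>u\<in>A. \<gamma> (n + 1) * p u * prob (never_active n u))
                   + \<gamma> (n + 1) / n * (\<Sum>u\<in>A. p u * (\<Sum>i=1..n. prob (active_only_at n u i)))"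
    using assms by (simp add: distrib_left sum.distrib sum_divide_distrib sum_distrib_left field_simps)
  finally show ?thesis
    by (simp add: expectation_fat_R)
qed

end

theorem mainTheorem5:
  fixes M :: "'w measure" and A :: "'a set" and p :: "'a \<Rightarrow> real"
    and \<gamma> :: "nat \<Rightarrow> real" and X :: "nat \<Rightarrow> 'a \<Rightarrow> 'w \<Rightarrow> bool" and n :: nat
  assumes "prob_space M"
    and "finite A"
    and "\<forall>u\<in>A. 0 \<le> p u \<and> p u \<le> 1"
    and "\<forall>i\<ge>1. 0 < \<gamma> i \<and> \<gamma> i \<le> 1"
    and "\<forall>i j. 1 \<le> i \<longrightarrow> i \<le> j \<longrightarrow> \<gamma> j \<le> \<gamma> i"
    and "prob_space.indep_vars M (\<lambda>_. count_space UNIV) (\<lambda>(i, u). X i u) ({1..} \<times> A)"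
    and "\<forall>i\<ge>1. \<forall>u\<in>A. distr M (count_space UNIV) (X i u) = measure_pmf (bernoulli_pmf (\<gamma> i * p u))"
    and "n \<ge> 1"
  shows "prob_space.expectation M (fat_R \<gamma> p A X n) - prob_space.expectation M (fat_Rhat \<gamma> A X n)
           \<in> {- \<gamma> (n + 1) * (\<Sum>u\<in>A. p u) / real n .. 0}"
proof -
  interpret fatigue_model M A p \<gamma> X
    using assms(1-4,6,7) by (simp add: fatigue_model_def fatigue_model_axioms_def)
  define prob_once where "prob_once u = (\<Sum>i=1..n. prob (active_only_at n u i))" for u
  define c where "c = \<gamma> (n + 1) / n"
  have c_nonneg: "0 \<le> c"
    using \<gamma>_bounds by (simp add: c_def less_imp_le)
  have "0 \<le> (\<Sum>u\<in>A. p u * prob_once u)"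
    using p_bounds by (auto simp: prob_once_def intro!: sum_nonneg mult_nonneg_nonneg)
  then have upper: "0 \<le> c * (\<Sum>u\<in>A. p u * prob_once u)"
    using c_nonneg by simp
  have "(\<Sum>u\<in>A. p u * prob_once u) \<le> (\<Sum>u\<in>A. p u)"
    using p_bounds sum_prob_active_only_at_le_1
    by (intro sum_mono) (simp add: prob_once_def mult_left_le)
  then have lower: "c * (\<Sum>u\<in>A. p u * prob_once u) \<le> c * (\<Sum>u\<in>A. p u)"
    using c_nonneg by (rule mult_left_mono)
  show ?thesis
    unfolding expectation_fat_R_minus_fat_Rhat[OF assms(8)] prob_once_def[symmetric]
    using upper lower by (simp add: c_def)
qed

end
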